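(* Let $d\ge 2$ and let $g:[-1,1]\to(-\infty,\infty]$ be a function that is finite and continuous on $[-1,1)$ with $g(1)=\lim_{t\to1^-}g(t)$, differentiable on $(-1,1)$, and such that $g''$ exists, is convex on $(-1,1)$ and is strictly positive on $(-1,1)$. Let $\omega_{2d}$ be an antipodal configuration of $2d$ points on $S^{d-1}$. Then $$P^g(\omega_{2d},S^{d-1})= d\left(g\left(\tfrac1{\sqrt d}\right)+g\left(-\tfrac1{\sqrt d}\right)\right)$$ holds if and only if $\omega_{2d}$ is the set of vertices of a regular cross-polytope inscribed in $S^{d-1}$, i.e. $\omega_{2d}=\{\pm\mathbf a_1,\ldots,\pm\mathbf a_d\}$ for some orthonormal basis $\{\mathbf a_1,\ldots,\mathbf a_d\}$ of $\mathbb R^d$.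
   Context: $S^{d-1}$ is the unit sphere in $\mathbb R^d$. A configuration is a list of points (points may coincide); it is antipodal if together with $\mathbf x$ it contains $-\mathbf x$. For a configuration $\omega_N=\{\mathbf x_1,\ldots,\mathbf x_N\}\subset S^{d-1}$, $P^g(\omega_N,S^{d-1}):=\min_{\mathbf x\in S^{d-1}}\sum_{i=1}^N g(\mathbf x\cdot\mathbf x_i)$. (Under these hypotheses one always has $P^g(\omega_{2d},S^{d-1})\le d(g(1/\sqrt d)+g(-1/\sqrt d))$ for antipodal $\omega_{2d}$.) *)

theory Defs
  imports "HOL-Analysis.Analysis" "HOL-Library.Multiset" "HOL-Library.Extended_Real"
begin

definition antipodal_config :: "('a::real_normed_vector) list \<Rightarrow> bool" where
  "antipodal_config xs \<longleftrightarrow> mset (map uminus xs) = mset xs"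

definition pot_sum :: "(real \<Rightarrow> ereal) \<Rightarrow> ('a::real_inner) list \<Rightarrow> 'a \<Rightarrow> ereal" where
  "pot_sum g xs x = sum_list (map (\<lambda>y. g (x \<bullet> y)) xs)"

definition polarization :: "(real \<Rightarrow> ereal) \<Rightarrow> ('a::real_inner) list \<Rightarrow> ereal" where
  "polarization g xs = (INF x \<in> sphere 0 1. pot_sum g xs x)"

text \<open>The list xs consists of the vertices of the regular cross-polytope built on
  an orthonormal basis a_i (indexed by the coordinate type 'n, so there are d of them).\<close>
definition cross_polytope_config :: "(real ^ 'n) list \<Rightarrow> bool" where
  "cross_polytope_config xs \<longleftrightarrow>
     (\<exists>a :: 'n \<Rightarrow> real ^ 'n. (\<forall>i j. a i \<bullet> a j = (if i = j then 1 else 0)) \<and>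
        mset xs = (\<Sum>i\<in>UNIV. {#a i, - a i#}))"

end

theory Submission
  imports Defs
begin

text \<open>Group the antipodal configuration as \<open>{\<plusminus>y\<^sub>1, ..., \<plusminus>y\<^sub>d}\<close> and put
  \<open>h t = g t + g (-t)\<close>, so that the potential at \<open>x\<close> is \<open>\<Sum>\<^sub>i h (x \<bullet> y\<^sub>i)\<close>.
  Convexity and positivity of \<open>g''\<close> make \<open>h\<close> strictly increasing on \<open>[0,1)\<close> and
  \<open>u \<mapsto> h (sqrt u)\<close> convex, so with \<open>c = 1/sqrt d\<close> the tangent bound
  \<open>h t \<ge> h c + k (t\<^sup>2 - c\<^sup>2)\<close> holds on \<open>[-1,1]\<close>. For an orthonormal basis
  \<open>\<Sum>\<^sub>i (x \<bullet> a\<^sub>i)\<^sup>2 = 1\<close>, so summing the tangent bounds gives potential \<open>\<ge> d h c\<close>,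
  with equality at \<open>x = c \<Sum>\<^sub>i a\<^sub>i\<close>. If the \<open>y\<^sub>i\<close> are not orthonormal, there is a unit
  \<open>x\<close> with \<open>\<bar>x \<bullet> y\<^sub>i\<bar> = s < c\<close> for all \<open>i\<close>: a unit vector orthogonal to all
  \<open>y\<^sub>i\<close> if they are dependent, and otherwise \<open>z / \<parallel>z\<parallel>\<close> for a signed sum
  \<open>z = \<Sum>\<^sub>j \<plusminus>w\<^sub>j\<close> of the dual basis with \<open>\<parallel>z\<parallel>\<^sup>2 \<ge> \<Sum>\<^sub>j \<parallel>w\<^sub>j\<parallel>\<^sup>2 > d\<close>.
  There the potential is \<open>d h s < d h c\<close>.\<close>

section \<open>Antipodal pairs\<close>

definition antipodal_pot :: "(real \<Rightarrow> 'a::plus) \<Rightarrow> real \<Rightarrow> 'a" where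
  "antipodal_pot f t = f t + f (-t)"

lemma antipodal_pot_minus [simp]:
  "antipodal_pot (f :: real \<Rightarrow> 'a::ab_semigroup_add) (-t) = antipodal_pot f t"
  by (simp add: antipodal_pot_def add.commute)

lemma antipodal_pot_abs [simp]:
  "antipodal_pot (f :: real \<Rightarrow> 'a::ab_semigroup_add) \<bar>t\<bar> = antipodal_pot f t"
  by (cases "t \<ge> 0") simp_all

lemma mset_antipodal_eq_sum_pairs:
  fixes M :: "('a::real_normed_vector) multiset"
  assumes "finite A" "image_mset uminus M = M" "0 \<notin># M" "size M = 2 * card A"
  shows "\<exists>y. M = (\<Sum>i\<in>A. {#y i, - y i#})"
  using assms
proof (induction A arbitrary: M rule: finite_induct)
  case empty
  then show ?case by simp
next
  case (insert a A)
  then obtain z where z: "z \<in># M" by fastforce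
  then have "- z \<noteq> z"
    using insert.prems(2) by (metis add.right_inverse scaleR_2 scaleR_eq_0_iff zero_neq_numeral)
  moreover have "- z \<in># M" using z insert.prems(1) by (metis image_eqI set_image_mset)
  ultimately have pair: "{#z, - z#} \<subseteq># M"
    using z by (simp add: insert_subset_eq_iff in_diff_count)
  define M' where "M' = M - {#z, - z#}"
  have "image_mset uminus M' = M'"
    unfolding M'_def using image_mset_Diff[OF pair, of uminus] insert.prems(1)
    by (simp add: add_mset_commute)
  moreover have "0 \<notin># M'" unfolding M'_def using insert.prems(2) by (meson in_diffD)
  moreover have "size M' = 2 * card A"
    unfolding M'_def using insert.prems(3) insert.hyps by (simp add: size_Diff_submset[OF pair])
  ultimately obtain y where y: "M' = (\<Sum>i\<in>A. {#y i, - y i#})" using insert.IH by blast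
  have "M = {#z, - z#} + M'"
    unfolding M'_def by (rule subset_mset.add_diff_inverse[OF pair, symmetric])
  also have "\<dots> = (\<Sum>i\<in>insert a A. {#(y(a := z)) i, - (y(a := z)) i#})"
    using y insert.hyps by (auto intro!: sum.cong)
  finally show ?case by blast
qed

lemma pot_sum_sum_pairs:
  assumes "finite A" "mset xs = (\<Sum>i\<in>A. {#y i, - y i#})"
  shows "pot_sum g xs x = (\<Sum>i\<in>A. antipodal_pot g (x \<bullet> y i))"
proof -
  have "pot_sum g xs x = sum_mset (image_mset (\<lambda>y. g (x \<bullet> y)) (mset xs))"
    unfolding pot_sum_def by (metis mset_map sum_mset_sum_list)
  also have "\<dots> = (\<Sum>i\<in>A. antipodal_pot g (x \<bullet> y i))"
    unfolding assms(2) using assms(1)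
    by (induction A rule: finite_induct) (auto simp: antipodal_pot_def add.assoc)
  finally show ?thesis .
qed

section \<open>Functions with convex positive second derivative\<close>

lemma convex_on_antipodal_pot_mono:
  fixes F :: "real \<Rightarrow> real"
  assumes "convex_on A F" "t \<in> A" "- t \<in> A" "0 \<le> s" "s \<le> t"
  shows "antipodal_pot F s \<le> antipodal_pot F t"
proof (cases "t = 0")
  case True
  with assms show ?thesis by simp
next
  case False
  define u where "u = (t - s) / (2 * t)"
  have u: "0 \<le> u" "u \<le> 1" using assms False unfolding u_def by (auto simp: field_simps)
  have "(1 - u) *\<^sub>R t + u *\<^sub>R (- t) = s" "(1 - u) *\<^sub>R (- t) + u *\<^sub>R t = - s"
    using False unfolding u_def by (simp_all add: field_simps)
  then have "F s \<le> (1 - u) * F t + u * F (- t)" "F (- s) \<le> (1 - u) * F (- t) + u * F t"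
    using convex_onD[OF assms(1) u assms(2,3)] convex_onD[OF assms(1) u assms(3,2)]
    by (simp_all only:)
  then show ?thesis unfolding antipodal_pot_def by (simp add: algebra_simps)
qed

lemma convex_on_chord_from_zero:
  fixes F :: "real \<Rightarrow> real"
  assumes "convex_on A F" "0 \<in> A" "t \<in> A" "F 0 = 0" "0 \<le> s" "s \<le> t"
  shows "t * F s \<le> s * F t"
proof (cases "t = 0")
  case True
  with assms show ?thesis by simp
next
  case False
  then have "t > 0" using assms by simp
  have u: "0 \<le> s / t" "s / t \<le> 1" using assms \<open>t > 0\<close> by simp_all
  have "F s = F ((1 - s / t) * 0 + (s / t) * t)" using \<open>t > 0\<close> by simp
  also have "\<dots> \<le> (s / t) * F t"
    using convex_onD[OF assms(1) u assms(2,3)] assms(4) by simp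
  finally show ?thesis using \<open>t > 0\<close> by (simp add: field_simps)
qed

locale convex_second_derivative =
  fixes f f' f'' :: "real \<Rightarrow> real"
  assumes f_deriv: "\<forall>t\<in>{-1<..<1}. (f has_real_derivative f' t) (at t)"
    and f'_deriv: "\<forall>t\<in>{-1<..<1}. (f' has_real_derivative f'' t) (at t)"
    and f''_convex: "convex_on {-1<..<1} f''"
    and f''_pos: "\<forall>t\<in>{-1<..<1}. f'' t > 0"
begin

lemma antipodal_pot_has_real_derivative:
  assumes "t \<in> {-1<..<1}"
  shows "(antipodal_pot f has_real_derivative f' t - f' (- t)) (at t)"
proof -
  have "((\<lambda>s. f (- s)) has_real_derivative - f' (- t)) (at t)"
    using f_deriv assms by (simp add: DERIV_mirror [symmetric])
  then show ?thesis
    unfolding antipodal_pot_def[abs_def] using DERIV_add f_deriv assms by fastforce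
qed

lemma f'_odd_part_has_real_derivative:
  assumes "t \<in> {-1<..<1}"
  shows "((\<lambda>s. f' s - f' (- s)) has_real_derivative antipodal_pot f'' t) (at t)"
proof -
  have "((\<lambda>s. f' (- s)) has_real_derivative - f'' (- t)) (at t)"
    using f'_deriv assms by (simp add: DERIV_mirror [symmetric])
  then show ?thesis
    unfolding antipodal_pot_def using DERIV_diff f'_deriv assms by fastforce
qed

lemma f'_odd_part_convex: "convex_on {0..<1} (\<lambda>s. f' s - f' (- s))"
proof (rule convex_on_realI)
  show "antipodal_pot f'' s \<le> antipodal_pot f'' t" if "s \<in> {0..<1}" "t \<in> {0..<1}" "s \<le> t" for s t
    using that by (intro convex_on_antipodal_pot_mono[OF f''_convex]) auto
qed (auto intro: f'_odd_part_has_real_derivative simp: is_interval_connected)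

lemma f'_minus_less:
  assumes "0 < t" "t < 1"
  shows "f' (- t) < f' t"
proof (rule DERIV_pos_imp_increasing[of "- t" t])
  show "\<exists>y. (f' has_real_derivative y) (at x) \<and> y > 0" if "- t \<le> x" "x \<le> t" for x
    using that assms f'_deriv f''_pos by (intro exI[of _ "f'' x"]) auto
qed (use assms in simp)

lemma f'_odd_part_chord:
  assumes "0 \<le> s" "s \<le> t" "t < 1"
  shows "t * (f' s - f' (- s)) \<le> s * (f' t - f' (- t))"
  using assms by (intro convex_on_chord_from_zero[OF f'_odd_part_convex]) auto

lemma antipodal_pot_strict_mono:
  assumes "0 \<le> s" "s < t" "t < 1"
  shows "antipodal_pot f s < antipodal_pot f t"
proof (rule DERIV_pos_imp_increasing_open[OF \<open>s < t\<close>])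
  show "\<exists>y. (antipodal_pot f has_real_derivative y) (at x) \<and> y > 0" if "s < x" "x < t" for x
  proof -
    have "0 < x" "x < 1" using that assms by linarith+
    then show ?thesis
      using antipodal_pot_has_real_derivative f'_minus_less
      by (intro exI[of _ "f' x - f' (- x)"] conjI) auto
  qed
  show "continuous_on {s..t} (antipodal_pot f)"
  proof (rule DERIV_atLeastAtMost_imp_continuous_on)
    show "\<exists>y. (antipodal_pot f has_real_derivative y) (at x)" if "s \<le> x" "x \<le> t" for x
      using that assms antipodal_pot_has_real_derivative by (intro exI[of _ "f' x - f' (- x)"]) auto
  qed
qed

text \<open>The tangent line at \<open>c\<^sup>2\<close> of the convex function \<open>u \<mapsto> h (sqrt u)\<close>, where \<open>h = antipodal_pot f\<close>.\<close>
lemma antipodal_pot_tangent_bound: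
  assumes "0 < c" "c < 1" "0 \<le> t" "t < 1"
  shows "antipodal_pot f c + (f' c - f' (- c)) / (2 * c) * (t\<^sup>2 - c\<^sup>2) \<le> antipodal_pot f t"
proof -
  define k where "k = (f' c - f' (- c)) / (2 * c)"
  define \<phi> where "\<phi> s = antipodal_pot f s - k * s\<^sup>2" for s
  have \<phi>_deriv: "(\<phi> has_real_derivative (c * (f' s - f' (- s)) - s * (f' c - f' (- c))) / c) (at s)"
    if "s \<in> {-1<..<1}" for s
  proof -
    have "(\<phi> has_real_derivative f' s - f' (- s) - k * (2 * s)) (at s)"
      unfolding \<phi>_def[abs_def]
      by (intro DERIV_diff antipodal_pot_has_real_derivative that) (auto intro!: derivative_eq_intros)
    moreover have "f' s - f' (- s) - k * (2 * s) = (c * (f' s - f' (- s)) - s * (f' c - f' (- c))) / c"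
      using \<open>c > 0\<close> unfolding k_def by (simp add: field_simps)
    ultimately show ?thesis by (simp only:)
  qed
  have "\<phi> c \<le> \<phi> t"
  proof (cases "t \<le> c")
    case True
    show ?thesis
    proof (rule DERIV_nonpos_imp_nonincreasing[OF True])
      fix x assume x: "t \<le> x" "x \<le> c"
      have "(c * (f' x - f' (- x)) - x * (f' c - f' (- c))) / c \<le> 0"
        using f'_odd_part_chord[of x c] x assms by (simp add: divide_nonpos_pos)
      moreover have "x \<in> {-1<..<1}" using x assms by auto
      ultimately show "\<exists>y. (\<phi> has_real_derivative y) (at x) \<and> y \<le> 0"
        using \<phi>_deriv by blast
    qed
  next
    case False
    then have "c \<le> t" by simp
    show ?thesis
    proof (rule DERIV_nonneg_imp_nondecreasing[OF \<open>c \<le> t\<close>])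
      fix x assume x: "c \<le> x" "x \<le> t"
      have "(c * (f' x - f' (- x)) - x * (f' c - f' (- c))) / c \<ge> 0"
        using f'_odd_part_chord[of c x] x assms by simp
      moreover have "x \<in> {-1<..<1}" using x assms by auto
      ultimately show "\<exists>y. (\<phi> has_real_derivative y) (at x) \<and> y \<ge> 0"
        using \<phi>_deriv by blast
    qed
  qed
  then show ?thesis unfolding \<phi>_def k_def [symmetric] by (simp add: right_diff_distrib)
qed

end

section \<open>Orthonormal and dual families\<close>

lemma exists_signs_sum_norm_sq_le:
  fixes w :: "'i \<Rightarrow> 'a::real_inner"
  assumes "finite I"
  shows "\<exists>e. (\<forall>i. e i = 1 \<or> e i = -1) \<and> (\<Sum>i\<in>I. (norm (w i))\<^sup>2) \<le> (norm (\<Sum>i\<in>I. e i *\<^sub>R w i))\<^sup>2"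
  using assms
proof (induction I rule: finite_induct)
  case empty
  show ?case by (rule exI[of _ "\<lambda>_. 1"]) simp
next
  case (insert a A)
  then obtain e where e: "\<forall>i. e i = 1 \<or> e i = -1"
    "(\<Sum>i\<in>A. (norm (w i))\<^sup>2) \<le> (norm (\<Sum>i\<in>A. e i *\<^sub>R w i))\<^sup>2" by blast
  define S where "S = (\<Sum>i\<in>A. e i *\<^sub>R w i)"
  define \<sigma> where "\<sigma> = (if S \<bullet> w a \<ge> 0 then 1 else (-1::real))"
  have sum_upd: "(\<Sum>i\<in>insert a A. (e(a := \<sigma>)) i *\<^sub>R w i) = \<sigma> *\<^sub>R w a + S"
    unfolding S_def using insert.hyps by (auto intro!: sum.cong)
  have "(norm (\<sigma> *\<^sub>R w a + S))\<^sup>2 = (norm (w a))\<^sup>2 + 2 * (\<sigma> * (S \<bullet> w a)) + (norm S)\<^sup>2"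
    unfolding power2_norm_eq_inner \<sigma>_def
    by (simp add: inner_add_left inner_add_right inner_commute algebra_simps)
  moreover have "\<sigma> * (S \<bullet> w a) \<ge> 0" unfolding \<sigma>_def by auto
  ultimately have "(norm (w a))\<^sup>2 + (norm S)\<^sup>2 \<le> (norm (\<Sum>i\<in>insert a A. (e(a := \<sigma>)) i *\<^sub>R w i))\<^sup>2"
    unfolding sum_upd by simp
  moreover have "\<forall>i. (e(a := \<sigma>)) i = 1 \<or> (e(a := \<sigma>)) i = -1" using e(1) unfolding \<sigma>_def by auto
  ultimately show ?case using e(2) insert.hyps unfolding S_def by (intro exI[of _ "e(a := \<sigma>)"]) auto
qed

lemma orthonormal_sum_inner_sq:
  fixes a :: "'n::finite \<Rightarrow> real^'n"
  assumes "\<forall>i j. a i \<bullet> a j = (if i = j then 1 else 0)"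
  shows "(\<Sum>i\<in>UNIV. (x \<bullet> a i)\<^sup>2) = (norm x)\<^sup>2"
proof -
  define A :: "real^'n^'n" where "A = (\<chi> i. a i)"
  have "orthogonal_matrix A"
    unfolding orthogonal_matrix_orthonormal_rows using assms
    by (auto simp: A_def row_def norm_eq_sqrt_inner orthogonal_def)
  then have "norm (A *v x) = norm x"
    by (simp add: orthogonal_transformation_matrix orthogonal_transformation_norm)
  then have "(norm x)\<^sup>2 = (A *v x) \<bullet> (A *v x)" by (metis power2_norm_eq_inner)
  also have "\<dots> = (\<Sum>i\<in>UNIV. (x \<bullet> a i)\<^sup>2)"
    unfolding inner_vec_def[of "A *v x"]
    by (simp add: matrix_vector_mul_component A_def inner_commute power2_eq_square)
  finally show ?thesis by simp
qed

lemma unit_orthogonal_or_dual_family: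
  fixes y :: "'n::finite \<Rightarrow> real^'n"
  obtains (orthogonal) x where "norm x = 1" "\<forall>i. x \<bullet> y i = 0"
    | (dual) w where "\<forall>i j. y i \<bullet> w j = (if i = j then 1 else 0)"
proof -
  define Y :: "real^'n^'n" where "Y = (\<chi> i. y i)"
  have Y_mult: "(Y *v x) $ i = y i \<bullet> x" for x i by (simp add: matrix_vector_mul_component Y_def)
  show thesis
  proof (cases "\<forall>x. Y *v x = 0 \<longrightarrow> x = 0")
    case True
    then obtain B where "B ** Y = mat 1" using matrix_left_invertible_ker by blast
    then have "Y ** B = mat 1" using matrix_left_right_inverse by blast
    moreover have "(Y ** B) $ i $ j = y i \<bullet> column j B" for i j
      by (simp add: matrix_matrix_mult_def Y_def column_def inner_vec_def)
    ultimately have "y i \<bullet> column j B = (if i = j then 1 else 0)" for i j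
      by (simp add: mat_def)
    then show thesis by (intro dual[of "\<lambda>j. column j B"]) simp
  next
    case False
    then obtain x where x: "Y *v x = 0" "x \<noteq> 0" by blast
    show thesis
    proof (rule orthogonal[of "x /\<^sub>R norm x"])
      show "norm (x /\<^sub>R norm x) = 1" using x by simp
      show "\<forall>i. (x /\<^sub>R norm x) \<bullet> y i = 0"
        using Y_mult x(1) by (simp add: inner_commute vec_eq_iff)
    qed
  qed
qed

lemma dual_family_sum_norm_sq_gt:
  fixes y w :: "'i::finite \<Rightarrow> 'a::real_inner"
  assumes unit: "\<forall>i. norm (y i) = 1"
    and dual: "\<forall>i j. y i \<bullet> w j = (if i = j then 1 else 0)"
    and not_orthonormal: "\<not> (\<forall>i j. y i \<bullet> y j = (if i = j then 1 else 0))"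
  shows "real CARD('i) < (\<Sum>j\<in>UNIV. (norm (w j))\<^sup>2)"
proof -
  have norm_ge: "1 \<le> norm (w j)" for j
    using norm_cauchy_schwarz[of "y j" "w j"] unit dual by simp
  have "\<exists>j. norm (w j) > 1"
  proof (rule ccontr)
    assume "\<not> ?thesis"
    then have "norm (w j) = 1" for j using norm_ge[of j] by (meson antisym not_less)
    moreover have "(norm (w j - y j))\<^sup>2 = (norm (w j))\<^sup>2 - 2 * (y j \<bullet> w j) + (norm (y j))\<^sup>2" for j
      unfolding power2_norm_eq_inner by (simp add: inner_diff_left inner_diff_right inner_commute)
    ultimately have "w = y" using unit dual by auto
    then show False using dual not_orthonormal by simp
  qed
  then obtain j where "1 < (norm (w j))\<^sup>2" by (metis one_less_power zero_less_numeral)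
  then have "(\<Sum>j\<in>(UNIV::'i set). 1) < (\<Sum>j\<in>UNIV. (norm (w j))\<^sup>2)"
    using norm_ge by (intro sum_strict_mono_ex1) (auto simp: one_le_power)
  then show ?thesis by simp
qed

lemma dual_family_unit_vector_equal_abs_inner:
  fixes y w :: "'i::finite \<Rightarrow> 'a::real_inner"
  assumes dual: "\<forall>i j. y i \<bullet> w j = (if i = j then 1 else 0)"
    and large: "real CARD('i) < (\<Sum>j\<in>UNIV. (norm (w j))\<^sup>2)"
  obtains x s where "norm x = 1" "0 \<le> s" "s < 1 / sqrt (real CARD('i))" "\<forall>i. \<bar>x \<bullet> y i\<bar> = s"
proof -
  obtain e where e: "\<forall>i. e i = 1 \<or> e i = -1"
    and e_sum: "(\<Sum>i\<in>UNIV. (norm (w i))\<^sup>2) \<le> (norm (\<Sum>i\<in>UNIV. e i *\<^sub>R w i))\<^sup>2"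
    using exists_signs_sum_norm_sq_le[of UNIV w] by auto
  define z where "z = (\<Sum>j\<in>UNIV. e j *\<^sub>R w j)"
  have z_inner: "z \<bullet> y i = e i" for i
  proof -
    have "z \<bullet> y i = (\<Sum>j\<in>UNIV. if j = i then e j else 0)"
      unfolding z_def inner_sum_left using dual by (intro sum.cong) (auto simp: inner_commute)
    then show ?thesis by simp
  qed
  have "sqrt (real CARD('i)) < norm z"
    using large e_sum unfolding z_def by (simp add: real_less_lsqrt)
  then have z_pos: "norm z > 0" and "1 / norm z < 1 / sqrt (real CARD('i))"
    by (auto intro: le_less_trans frac_less2)
  moreover have "\<bar>(z /\<^sub>R norm z) \<bullet> y i\<bar> = 1 / norm z" for i
  proof -
    have "(z /\<^sub>R norm z) \<bullet> y i = e i / norm z"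
      using z_inner[of i] by (simp add: divide_inverse mult.commute)
    then show ?thesis using e[rule_format, of i] z_pos by auto
  qed
  ultimately show thesis using that[of "z /\<^sub>R norm z" "1 / norm z"] by simp
qed

lemma non_orthonormal_unit_vector_small_inner:
  fixes y :: "'n::finite \<Rightarrow> real^'n"
  assumes "\<forall>i. norm (y i) = 1" "\<not> (\<forall>i j. y i \<bullet> y j = (if i = j then 1 else 0))"
  obtains x s where "norm x = 1" "0 \<le> s" "s < 1 / sqrt (real CARD('n))" "\<forall>i. \<bar>x \<bullet> y i\<bar> = s"
proof (cases rule: unit_orthogonal_or_dual_family[of y])
  case (orthogonal x)
  then show thesis using that[of x 0] by simp
next
  case (dual w)
  then show thesis
    using that dual_family_sum_norm_sq_gt[OF assms(1) dual assms(2)]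
    by (blast intro: dual_family_unit_vector_equal_abs_inner[OF dual])
qed

lemma orthonormal_normalized_diagonal:
  fixes a :: "'n::finite \<Rightarrow> real^'n"
  assumes orthonormal: "\<forall>i j. a i \<bullet> a j = (if i = j then 1 else 0)"
  obtains x where "norm x = 1" "\<forall>i. x \<bullet> a i = 1 / sqrt (real CARD('n))"
proof
  define x where "x = (1 / sqrt (real CARD('n))) *\<^sub>R (\<Sum>j\<in>UNIV. a j)"
  have "(\<Sum>j\<in>UNIV. a j \<bullet> a i) = 1" for i
    using orthonormal by (simp add: sum.delta)
  then show inner: "\<forall>i. x \<bullet> a i = 1 / sqrt (real CARD('n))"
    unfolding x_def by (simp add: inner_sum_left)
  have "(norm x)\<^sup>2 = 1"
    using orthonormal_sum_inner_sq[OF orthonormal, of x] inner by (simp add: power_divide)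
  then show "norm x = 1" using norm_ge_zero[of x] by (auto simp: power2_eq_1_iff)
qed

section \<open>Polarization of antipodal configurations\<close>

locale admissible_potential =
  convex_second_derivative "\<lambda>t. real_of_ereal (g t)" g1 g2
  for g :: "real \<Rightarrow> ereal" and g1 g2 :: "real \<Rightarrow> real" +
  assumes g_finite: "\<forall>t\<in>{-1..<1}. \<bar>g t\<bar> \<noteq> \<infinity>"
    and g_continuous: "continuous_on {-1..<1} (\<lambda>t. real_of_ereal (g t))"
    and g_tendsto_1: "(g \<longlongrightarrow> g 1) (at_left 1)"
begin

abbreviation g_real :: "real \<Rightarrow> real" where
  "g_real t \<equiv> real_of_ereal (g t)"

lemma ereal_g_real: "t \<in> {-1..<1} \<Longrightarrow> ereal (g_real t) = g t"
  using g_finite by (simp add: ereal_real')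

lemma antipodal_pot_eq_ereal:
  assumes "\<bar>t\<bar> < 1"
  shows "antipodal_pot g t = ereal (antipodal_pot g_real t)"
proof -
  have "t \<in> {-1..<1}" "- t \<in> {-1..<1}" using assms by auto
  then have "ereal (g_real t) = g t" "ereal (g_real (- t)) = g (- t)" by (auto intro: ereal_g_real)
  then show ?thesis unfolding antipodal_pot_def by (metis plus_ereal.simps(1))
qed

lemma tendsto_antipodal_pot_at_left_1: "(antipodal_pot g \<longlongrightarrow> antipodal_pot g 1) (at_left 1)"
proof -
  have near_1: "\<forall>\<^sub>F t in at_left 1. t \<in> {0<..<1::real}"
    by (rule eventually_at_left_real) simp
  have "continuous_on {0..1} (\<lambda>t. g_real (- t))"
    by (rule continuous_on_compose2[OF g_continuous]) (auto intro!: continuous_intros)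
  then have "((\<lambda>t. ereal (g_real (- t))) \<longlongrightarrow> ereal (g_real (- 1))) (at_left 1)"
    by (intro tendsto_ereal continuous_on_Icc_at_leftD) auto
  moreover have "\<forall>\<^sub>F t in at_left 1. ereal (g_real (- t)) = g (- t)"
    using near_1 by eventually_elim (use ereal_g_real in auto)
  ultimately have "((\<lambda>t. g (- t)) \<longlongrightarrow> g (- 1)) (at_left 1)"
    using ereal_g_real[of "- 1"] by (simp add: tendsto_cong)
  then show ?thesis
    unfolding antipodal_pot_def[abs_def] using g_finite
    by (intro tendsto_add_ereal_general1[OF _ g_tendsto_1]) auto
qed

lemma antipodal_pot_lower_bound:
  assumes "0 < c" "c < 1" "\<bar>t\<bar> \<le> 1"
  shows "ereal (antipodal_pot g_real c + (g1 c - g1 (- c)) / (2 * c) * (t\<^sup>2 - c\<^sup>2)) \<le> antipodal_pot g t"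
proof -
  define B where "B s = ereal (antipodal_pot g_real c + (g1 c - g1 (- c)) / (2 * c) * (s\<^sup>2 - c\<^sup>2))" for s
  have below: "B s \<le> antipodal_pot g s" if "0 \<le> s" "s < 1" for s
    using antipodal_pot_tangent_bound[OF assms(1,2) that] antipodal_pot_eq_ereal[of s] that
    by (simp add: B_def)
  have "B \<bar>t\<bar> \<le> antipodal_pot g \<bar>t\<bar>"
  proof (cases "\<bar>t\<bar> < 1")
    case True
    then show ?thesis using below[of "\<bar>t\<bar>"] by simp
  next
    case False
    then have "\<bar>t\<bar> = 1" using assms(3) by simp
    have "B 1 \<le> antipodal_pot g 1"
    proof (rule tendsto_le[OF trivial_limit_at_left_real tendsto_antipodal_pot_at_left_1])
      show "(B \<longlongrightarrow> B 1) (at_left 1)"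
        unfolding B_def by (intro tendsto_intros)
      show "\<forall>\<^sub>F s in at_left 1. B s \<le> antipodal_pot g s"
        using eventually_at_left_real[of 0 1, OF zero_less_one] by eventually_elim (use below in auto)
    qed
    then show ?thesis using \<open>\<bar>t\<bar> = 1\<close> by simp
  qed
  then show ?thesis by (simp add: B_def)
qed

lemma pot_sum_orthonormal_lower_bound:
  fixes xs :: "(real^'n) list" and a :: "'n \<Rightarrow> real^'n"
  assumes dim: "CARD('n) \<ge> 2"
    and orthonormal: "\<forall>i j. a i \<bullet> a j = (if i = j then 1 else 0)"
    and pairs: "mset xs = (\<Sum>i\<in>UNIV. {#a i, - a i#})"
    and "norm x = 1"
  shows "ereal (real CARD('n) * antipodal_pot g_real (1 / sqrt (real CARD('n)))) \<le> pot_sum g xs x"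
proof -
  define c where "c = 1 / sqrt (real CARD('n))"
  define k where "k = (g1 c - g1 (- c)) / (2 * c)"
  have c: "0 < c" "c < 1" "real CARD('n) * c\<^sup>2 = 1"
    using dim by (auto simp: c_def power_divide)
  have "\<bar>x \<bullet> a i\<bar> \<le> 1" for i
    using Cauchy_Schwarz_ineq2[of x "a i"] orthonormal \<open>norm x = 1\<close> by (simp add: norm_eq_sqrt_inner)
  then have "(\<Sum>i\<in>UNIV. ereal (antipodal_pot g_real c + k * ((x \<bullet> a i)\<^sup>2 - c\<^sup>2))) \<le> pot_sum g xs x"
    unfolding pot_sum_sum_pairs[OF finite_class.finite_UNIV pairs] k_def
    by (intro sum_mono antipodal_pot_lower_bound c)
  moreover have "(\<Sum>i\<in>UNIV. antipodal_pot g_real c + k * ((x \<bullet> a i)\<^sup>2 - c\<^sup>2))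
      = real CARD('n) * antipodal_pot g_real c + k * ((\<Sum>i\<in>UNIV. (x \<bullet> a i)\<^sup>2) - real CARD('n) * c\<^sup>2)"
    by (simp add: sum.distrib sum_subtractf sum_distrib_left algebra_simps)
  moreover have "(\<Sum>i\<in>UNIV. (x \<bullet> a i)\<^sup>2) = real CARD('n) * c\<^sup>2"
    using orthonormal_sum_inner_sq[OF orthonormal, of x] \<open>norm x = 1\<close> c(3) by simp
  ultimately show ?thesis by (simp add: sum_ereal c_def)
qed

lemma polarization_cross_polytope:
  fixes xs :: "(real^'n) list" and a :: "'n \<Rightarrow> real^'n"
  assumes dim: "CARD('n) \<ge> 2"
    and orthonormal: "\<forall>i j. a i \<bullet> a j = (if i = j then 1 else 0)"
    and pairs: "mset xs = (\<Sum>i\<in>UNIV. {#a i, - a i#})"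
  shows "polarization g xs = ereal (real CARD('n)) * antipodal_pot g (1 / sqrt (real CARD('n)))"
proof -
  define c where "c = 1 / sqrt (real CARD('n))"
  have "c < 1" using dim by (simp add: c_def)
  obtain x0 where x0: "norm x0 = 1" "\<forall>i. x0 \<bullet> a i = c"
    using orthonormal_normalized_diagonal[OF orthonormal] unfolding c_def by blast
  have "pot_sum g xs x0 = ereal (real CARD('n) * antipodal_pot g_real c)"
    using x0(2) \<open>c < 1\<close>
    by (simp add: pot_sum_sum_pairs[OF finite_class.finite_UNIV pairs] antipodal_pot_eq_ereal sum_ereal c_def)
  then have "polarization g xs \<le> ereal (real CARD('n) * antipodal_pot g_real c)"
    unfolding polarization_def using x0(1) by (metis INF_lower mem_sphere_0)
  moreover have "ereal (real CARD('n) * antipodal_pot g_real c) \<le> polarization g xs"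
    unfolding polarization_def c_def
    by (intro INF_greatest pot_sum_orthonormal_lower_bound[OF dim orthonormal pairs]) simp
  ultimately show ?thesis
    using \<open>c < 1\<close> by (simp add: antipodal_pot_eq_ereal c_def)
qed

lemma polarization_less_non_orthonormal:
  fixes xs :: "(real^'n) list" and y :: "'n \<Rightarrow> real^'n"
  assumes dim: "CARD('n) \<ge> 2"
    and unit: "\<forall>i. norm (y i) = 1"
    and not_orthonormal: "\<not> (\<forall>i j. y i \<bullet> y j = (if i = j then 1 else 0))"
    and pairs: "mset xs = (\<Sum>i\<in>UNIV. {#y i, - y i#})"
  shows "polarization g xs < ereal (real CARD('n)) * antipodal_pot g (1 / sqrt (real CARD('n)))"
proof -
  define c where "c = 1 / sqrt (real CARD('n))"
  have "c < 1" using dim by (simp add: c_def)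
  obtain x s where x: "norm x = 1" "0 \<le> s" "s < c" "\<forall>i. \<bar>x \<bullet> y i\<bar> = s"
    using non_orthonormal_unit_vector_small_inner[OF unit not_orthonormal] unfolding c_def by blast
  have "polarization g xs \<le> pot_sum g xs x"
    unfolding polarization_def using x(1) by (intro INF_lower) simp
  also have "pot_sum g xs x = (\<Sum>i\<in>UNIV. antipodal_pot g \<bar>x \<bullet> y i\<bar>)"
    by (simp add: pot_sum_sum_pairs[OF finite_class.finite_UNIV pairs])
  also have "\<dots> = ereal (real CARD('n) * antipodal_pot g_real s)"
    using x \<open>c < 1\<close> by (simp add: antipodal_pot_eq_ereal sum_ereal)
  also have "\<dots> < ereal (real CARD('n) * antipodal_pot g_real c)"
    using antipodal_pot_strict_mono[OF x(2,3) \<open>c < 1\<close>] by simp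
  also have "\<dots> = ereal (real CARD('n)) * antipodal_pot g c"
    using \<open>c < 1\<close> by (simp add: antipodal_pot_eq_ereal c_def)
  finally show ?thesis unfolding c_def .
qed

end

theorem corollary3p4:
  fixes g :: "real \<Rightarrow> ereal" and g1 g2 :: "real \<Rightarrow> real"
    and xs :: "(real ^ 'n) list"
  assumes dim: "CARD('n) \<ge> 2"
    and finite: "\<forall>t\<in>{-1..<1}. \<bar>g t\<bar> \<noteq> \<infinity>"
    and cont: "continuous_on {-1..<1} (\<lambda>t. real_of_ereal (g t))"
    and lim1: "(g \<longlongrightarrow> g 1) (at_left 1)"
    and deriv1: "\<forall>t\<in>{-1<..<1}. ((\<lambda>s. real_of_ereal (g s)) has_real_derivative g1 t) (at t)"
    and deriv2: "\<forall>t\<in>{-1<..<1}. (g1 has_real_derivative g2 t) (at t)"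
    and convex: "convex_on {-1<..<1} g2"
    and pos: "\<forall>t\<in>{-1<..<1}. g2 t > 0"
    and on_sphere: "\<forall>x\<in>set xs. norm x = 1"
    and len: "length xs = 2 * CARD('n)"
    and antip: "antipodal_config xs"
  shows "polarization g xs
           = ereal (real CARD('n)) * (g (1 / sqrt (real CARD('n))) + g (- 1 / sqrt (real CARD('n))))
         \<longleftrightarrow> cross_polytope_config xs"
proof -
  interpret admissible_potential g g1 g2
    by unfold_locales (fact deriv1 deriv2 convex pos finite cont lim1)+
  have "0 \<notin> set xs" using on_sphere by auto
  then obtain y :: "'n \<Rightarrow> real^'n" where pairs: "mset xs = (\<Sum>i\<in>UNIV. {#y i, - y i#})"
    using mset_antipodal_eq_sum_pairs[of "UNIV :: 'n set" "mset xs"] antip len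
    by (auto simp: antipodal_config_def)
  have "y i \<in># mset xs" for i
    unfolding pairs by (simp add: sum.remove[of UNIV i])
  then have unit: "\<forall>i. norm (y i) = 1" using on_sphere by simp
  let ?value = "ereal (real CARD('n)) * antipodal_pot g (1 / sqrt (real CARD('n)))"
  have "ereal (real CARD('n)) * (g (1 / sqrt (real CARD('n))) + g (- 1 / sqrt (real CARD('n))))
      = ?value"
    by (simp add: antipodal_pot_def)
  moreover have "polarization g xs = ?value \<Longrightarrow> cross_polytope_config xs"
    using polarization_less_non_orthonormal[OF dim unit _ pairs] pairs
    unfolding cross_polytope_config_def by force
  moreover have "cross_polytope_config xs \<Longrightarrow> polarization g xs = ?value"
    unfolding cross_polytope_config_def using polarization_cross_polytope[OF dim] by blast
  ultimately show ?thesis by auto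
qed

end
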